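(* Let $d\ge 2$ and $x\in[-1,1]$, and let $\rho^{AC}$ be the state on $\mathcal{H}^A\otimes\mathcal{H}^C$ defined in the context. For $r=1,\dots,d$ define the vectors $|\mu^{(r)}_k\rangle\in\mathcal{H}^C$, $k=1,\dots,d$, by $|\mu^{(r)}_r\rangle=|\mu^{(+)}_{rr}\rangle$, $|\mu^{(r)}_k\rangle=\frac{1}{\sqrt2}\big(|\mu^{(+)}_{kr}\rangle+|\mu^{(-)}_{kr}\rangle\big)$ for $k<r$, and $|\mu^{(r)}_k\rangle=\frac{1}{\sqrt2}\big(|\mu^{(+)}_{rk}\rangle-|\mu^{(-)}_{rk}\rangle\big)$ for $k>r$, and the maximally entangled states $$|\Psi^{\max}_r\rangle=\frac{1}{\sqrt d}\sum_{k=1}^d |k\rangle\otimes|\mu^{(r)}_k\rangle,\qquad r=1,\dots,d.$$ (The family $\{|\mu^{(r)}_k\rangle\}_{r,k}$ is an orthonormal basis of $\mathcal{H}^C$.) Then the set of maximally entangled states that attains the maximum in the definition of the fully entangled fraction of $\rho^{AC}$ is $\{|\Psi^{\max}_r\rangle\}_{r=1}^d$, i.e. $$\mathcal{F}(\rho^{AC})=\sum_{r=1}^d\langle\Psi^{\max}_r|\rho^{AC}|\Psi^{\max}_r\rangle .$$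
   Context: Let $\mathcal{H}^A=\mathbb{C}^d$ with orthonormal basis $\{|1\rangle,\dots,|d\rangle\}$ and let $\mathcal{H}^C=\mathbb{C}^{d^2}$ with orthonormal basis $\{|\mu^{(+)}_{kl}\rangle\}_{1\le k\le l\le d}\cup\{|\mu^{(-)}_{kl}\rangle\}_{1\le k<l\le d}$. For $x\in[-1,1]$ put $\lambda_\pm=\frac{1\pm x}{d(d\pm1)}$, and let $\alpha,\theta\in[0,\pi/2]$ be defined by $\cos\alpha=\sqrt{d\lambda_+}$ and $\cos\theta=\sqrt{\lambda_+/(\lambda_++\lambda_-)}$. For $r=1,\dots,d$ let $$|\Psi_r\rangle=\cos\alpha\,|r\rangle|\mu^{(+)}_{rr}\rangle+\frac{\sin\alpha}{\sqrt{d-1}}\sum_{k=1}^{r-1}|k\rangle\big(\cos\theta|\mu^{(+)}_{kr}\rangle+\sin\theta|\mu^{(-)}_{kr}\rangle\big)+\frac{\sin\alpha}{\sqrt{d-1}}\sum_{k=r+1}^{d}|k\rangle\big(\cos\theta|\mu^{(+)}_{rk}\rangle-\sin\theta|\mu^{(-)}_{rk}\rangle\big),$$ and $\rho^{AC}=\frac1d\sum_{r=1}^d|\Psi_r\rangle\langle\Psi_r|$. (This $\rho^{AC}$ is obtained by tracing out $B$ from a purification on $\mathcal{H}^A\otimes\mathcal{H}^B\otimes\mathcal{H}^C$ of the $d\otimes d$ Werner state $\rho_{\mathrm w}^{AB}=\frac{d-x}{d^3-d}\mathbb{I}+\frac{dx-1}{d^3-d}F$, $F$ the swap.) Fully entangled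 fraction: for a state $\rho$ on $\mathbb{C}^d\otimes\mathbb{C}^{d^2}$ (so $d^2=Kd$ with $K=d$), fix an orthonormal basis $\{|e_m\rangle\}_{m=1}^{d^2}$ of the second factor and set $|\psi^{\max}_i\rangle=\frac1{\sqrt d}\sum_{j=1}^d|j\rangle\otimes|e_{j+(i-1)d}\rangle$, $i=1,\dots,d$; then $\mathcal{F}(\rho)=\max_{V}\sum_{i=1}^{d}\langle\psi^{\max}_i|(\mathbb{I}\otimes V)\rho(\mathbb{I}\otimes V^\dagger)|\psi^{\max}_i\rangle$, the maximum over all unitaries $V$ on the second factor. *)

theory Defs
  imports Complex_Main
begin

text \<open>Labels of the orthonormal basis of H^C = C^(d^2):
  (True,k,l) stands for mu^(+)_kl (1 <= k <= l <= d),
  (False,k,l) stands for mu^(-)_kl (1 <= k < l <= d).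
  Vectors of H^C are functions label => complex (only values on CLabels d matter);
  vectors of H^A (x) H^C are functions nat => label => complex, first index in {1..d}.\<close>

type_synonym label = "bool \<times> nat \<times> nat"

definition CLabels :: "nat \<Rightarrow> label set" where
  "CLabels d = {(True,k,l) | k l. 1 \<le> k \<and> k \<le> l \<and> l \<le> d}
             \<union> {(False,k,l) | k l. 1 \<le> k \<and> k < l \<and> l \<le> d}"

definition lam_plus :: "nat \<Rightarrow> real \<Rightarrow> real" where
  "lam_plus d x = (1 + x) / (real d * (real d + 1))"

definition lam_minus :: "nat \<Rightarrow> real \<Rightarrow> real" where
  "lam_minus d x = (1 - x) / (real d * (real d - 1))"

definition alpha_ang :: "nat \<Rightarrow> real \<Rightarrow> real" where
  "alpha_ang d x = arccos (sqrt (real d * lam_plus d x))"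

definition theta_ang :: "nat \<Rightarrow> real \<Rightarrow> real" where
  "theta_ang d x = arccos (sqrt (lam_plus d x / (lam_plus d x + lam_minus d x)))"

definition basis_vec :: "label \<Rightarrow> label \<Rightarrow> complex" where
  "basis_vec l c = (if c = l then 1 else 0)"

definition Psi :: "nat \<Rightarrow> real \<Rightarrow> nat \<Rightarrow> nat \<Rightarrow> label \<Rightarrow> complex" where
  "Psi d x r a c =
    (let ca = complex_of_real (cos (alpha_ang d x));
         sa = complex_of_real (sin (alpha_ang d x) / sqrt (real d - 1));
         ct = complex_of_real (cos (theta_ang d x));
         st = complex_of_real (sin (theta_ang d x))
     in if a = r then ca * basis_vec (True,r,r) c
        else if 1 \<le> a \<and> a < r then sa * (ct * basis_vec (True,a,r) c + st * basis_vec (False,a,r) c)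
        else if r < a \<and> a \<le> d then sa * (ct * basis_vec (True,r,a) c - st * basis_vec (False,r,a) c)
        else 0)"

definition rhoAC :: "nat \<Rightarrow> real \<Rightarrow> (nat \<times> label) \<Rightarrow> (nat \<times> label) \<Rightarrow> complex" where
  "rhoAC d x p q = (1 / of_nat d) * (\<Sum>r\<in>{1..d}. Psi d x r (fst p) (snd p) * cnj (Psi d x r (fst q) (snd q)))"

definition expect :: "nat \<Rightarrow> ((nat \<times> label) \<Rightarrow> (nat \<times> label) \<Rightarrow> complex) \<Rightarrow> (nat \<Rightarrow> label \<Rightarrow> complex) \<Rightarrow> complex" where
  "expect d M psi = (\<Sum>p\<in>{1..d} \<times> CLabels d. \<Sum>q\<in>{1..d} \<times> CLabels d.
       cnj (psi (fst p) (snd p)) * M p q * psi (fst q) (snd q))"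

definition unitary_C :: "nat \<Rightarrow> (label \<Rightarrow> label \<Rightarrow> complex) \<Rightarrow> bool" where
  "unitary_C d V \<longleftrightarrow>
     (\<forall>a\<in>CLabels d. \<forall>b\<in>CLabels d.
        (\<Sum>m\<in>CLabels d. cnj (V m a) * V m b) = (if a = b then 1 else 0)) \<and>
     (\<forall>a\<in>CLabels d. \<forall>b\<in>CLabels d.
        (\<Sum>m\<in>CLabels d. V a m * cnj (V b m)) = (if a = b then 1 else 0))"

definition conj_IV :: "nat \<Rightarrow> (label \<Rightarrow> label \<Rightarrow> complex) \<Rightarrow> ((nat \<times> label) \<Rightarrow> (nat \<times> label) \<Rightarrow> complex)
     \<Rightarrow> (nat \<times> label) \<Rightarrow> (nat \<times> label) \<Rightarrow> complex" where
  "conj_IV d V M p q = (\<Sum>c1\<in>CLabels d. \<Sum>c2\<in>CLabels d.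
      V (snd p) c1 * M (fst p, c1) (fst q, c2) * cnj (V (snd q) c2))"

definition onb_C :: "nat \<Rightarrow> (nat \<Rightarrow> label \<Rightarrow> complex) \<Rightarrow> bool" where
  "onb_C d e \<longleftrightarrow> (\<forall>m\<in>{1..d^2}. \<forall>n\<in>{1..d^2}.
      (\<Sum>c\<in>CLabels d. cnj (e m c) * e n c) = (if m = n then 1 else 0))"

definition psi_max :: "nat \<Rightarrow> (nat \<Rightarrow> label \<Rightarrow> complex) \<Rightarrow> nat \<Rightarrow> nat \<Rightarrow> label \<Rightarrow> complex" where
  "psi_max d e i j c = (if 1 \<le> j \<and> j \<le> d then complex_of_real (1 / sqrt (real d)) * e (j + (i - 1) * d) c else 0)"

definition FEF :: "nat \<Rightarrow> (nat \<Rightarrow> label \<Rightarrow> complex) \<Rightarrow> ((nat \<times> label) \<Rightarrow> (nat \<times> label) \<Rightarrow> complex) \<Rightarrow> real" where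
  "FEF d e M = (SUP V \<in> {V. unitary_C d V}.
      Re (\<Sum>i\<in>{1..d}. expect d (conj_IV d V M) (psi_max d e i)))"

definition mu_r :: "nat \<Rightarrow> nat \<Rightarrow> label \<Rightarrow> complex" where
  "mu_r r k c =
     (if k = r then basis_vec (True,r,r) c
      else if k < r then complex_of_real (1 / sqrt 2) * (basis_vec (True,k,r) c + basis_vec (False,k,r) c)
      else complex_of_real (1 / sqrt 2) * (basis_vec (True,r,k) c - basis_vec (False,r,k) c))"

definition Psi_max :: "nat \<Rightarrow> nat \<Rightarrow> nat \<Rightarrow> label \<Rightarrow> complex" where
  "Psi_max d r a c = (if 1 \<le> a \<and> a \<le> d then complex_of_real (1 / sqrt (real d)) * mu_r r a c else 0)"

end

theory Submission
  imports Defs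
begin

text \<open>
  Each \<open>\<Psi>\<^sub>r\<close> has the coordinates \<open>\<kappa>(c) \<mu>\<^sup>(\<^sup>r\<^sup>)\<^sub>a(c)\<close>, where the weight \<open>\<kappa>\<close> is
  \<open>\<kappa>\<^sub>+ = \<surd>(d \<lambda>\<^sub>+)\<close> on the symmetric labels and \<open>\<kappa>\<^sub>- = \<surd>(d \<lambda>\<^sub>-)\<close> on the antisymmetric
  ones.
  With \<open>\<phi>\<^sub>i = (I \<otimes> V\<^sup>\<dagger>) \<psi>\<^sup>m\<^sup>a\<^sup>x\<^sub>i\<close>, the quantity maximised in the fully entangled fraction is
  \<open>(1/d) \<Sum>\<^sub>i\<^sub>,\<^sub>r |\<langle>\<phi>\<^sub>i|\<Psi>\<^sub>r\<rangle>|\<^sup>2\<close>.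
  For fixed \<open>a\<close> the vectors \<open>\<mu>\<^sup>(\<^sup>r\<^sup>)\<^sub>a\<close> are orthogonal for the \<open>\<kappa>\<close>-weighted inner product, and
  their weighted squared norms add up over \<open>a\<close> to \<open>\<beta> = \<kappa>\<^sub>+ + (d - 1)(\<kappa>\<^sub>+ + \<kappa>\<^sub>-)/2\<close>
  independently of \<open>r\<close>. A weighted AM-GM estimate then bounds the double sum by
  \<open>\<beta>\<^sup>2\<close>, using \<open>\<Sum>\<^sub>c \<kappa>(c) = d \<beta>\<close> and \<open>\<Sum>\<^sub>i\<^sub>,\<^sub>a |\<phi>\<^sub>i(a,c)|\<^sup>2 = 1/d\<close>.
  The unitary sending \<open>e\<^sub>a\<^sub>+\<^sub>(\<^sub>i\<^sub>-\<^sub>1\<^sub>)\<^sub>d\<close> to \<open>\<mu>\<^sup>(\<^sup>i\<^sup>)\<^sub>a\<close> turns every \<open>\<phi>\<^sub>i\<close> into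
  \<open>\<Psi>\<^sup>m\<^sup>a\<^sup>x\<^sub>i\<close> and attains the bound, so both sides of the claim equal \<open>\<beta>\<^sup>2/d\<close>.
\<close>

section \<open>Orthonormal families\<close>

lemma hermitian_idempotent_row_norm:
  fixes P :: "'c \<Rightarrow> 'c \<Rightarrow> complex"
  assumes herm: "\<And>u v. P v u = cnj (P u v)"
    and idem: "\<And>u v. (\<Sum>w\<in>C. P u w * P w v) = P u v"
  shows "(\<Sum>w\<in>C. (cmod (P u w))\<^sup>2) = Re (P u u)" and "P u u = of_real (Re (P u u))"
proof -
  have "complex_of_real ((cmod (P u w))\<^sup>2) = P u w * P w u" for w
    unfolding complex_norm_square by (metis herm)
  then have "(\<Sum>w\<in>C. complex_of_real ((cmod (P u w))\<^sup>2)) = (\<Sum>w\<in>C. P u w * P w u)"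
    by simp
  also have "\<dots> = P u u"
    by (rule idem)
  finally show "(\<Sum>w\<in>C. (cmod (P u w))\<^sup>2) = Re (P u u)"
    by (metis Re_complex_of_real of_real_sum)
  show "P u u = of_real (Re (P u u))"
    using herm[of u u] by (simp add: complex_eq_iff)
qed

lemma hermitian_idempotent_full_trace_eq_id:
  fixes P :: "'c \<Rightarrow> 'c \<Rightarrow> complex"
  assumes fin: "finite C"
    and herm: "\<And>u v. P v u = cnj (P u v)"
    and idem: "\<And>u v. (\<Sum>w\<in>C. P u w * P w v) = P u v"
    and trace: "(\<Sum>u\<in>C. P u u) = of_nat (card C)"
    and u: "u \<in> C" and v: "v \<in> C"
  shows "P u v = (if u = v then 1 else 0)"
proof -
  note row_norm = hermitian_idempotent_row_norm(1)[OF herm idem]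
    and diag_real = hermitian_idempotent_row_norm(2)[OF herm idem]
  have diag_le_1: "Re (P u u) \<le> 1" if "u \<in> C" for u
  proof -
    have "(Re (P u u))\<^sup>2 = (cmod (P u u))\<^sup>2"
      by (subst diag_real) simp
    also have "\<dots> \<le> Re (P u u)"
      unfolding row_norm[symmetric] using fin that by (intro member_le_sum) auto
    finally show ?thesis
      by (cases "Re (P u u) > 0") (simp_all add: power2_eq_square)
  qed
  have diag_eq_1: "Re (P u u) = 1" if "u \<in> C" for u
  proof -
    have "(\<Sum>u\<in>C. 1 - Re (P u u)) = 0"
      using arg_cong[OF trace, of Re] by (simp add: sum_subtractf flip: Re_sum)
    then show ?thesis
      using that diag_le_1 by (subst (asm) sum_nonneg_eq_0_iff[OF fin]) auto
  qed
  show ?thesis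
  proof (cases "u = v")
    case True
    then show ?thesis using diag_real[of u] diag_eq_1[OF u] by simp
  next
    case False
    have "(\<Sum>w\<in>C - {u}. (cmod (P u w))\<^sup>2) = 0"
      using row_norm[of u] diag_real[of u] diag_eq_1[OF u] sum.remove[OF fin u, of "\<lambda>w. (cmod (P u w))\<^sup>2"]
      by simp
    then have "(cmod (P u v))\<^sup>2 = 0"
      using fin v False by (subst (asm) sum_nonneg_eq_0_iff) auto
    then show ?thesis using False by simp
  qed
qed

lemma orthonormal_family_complete:
  fixes f :: "'i \<Rightarrow> 'c \<Rightarrow> complex"
  assumes finI: "finite I" and finC: "finite C" and card: "card I = card C"
    and orth: "\<And>i j. i \<in> I \<Longrightarrow> j \<in> I \<Longrightarrow> (\<Sum>c\<in>C. cnj (f i c) * f j c) = (if i = j then 1 else 0)"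
    and "c \<in> C" "c' \<in> C"
  shows "(\<Sum>i\<in>I. f i c * cnj (f i c')) = (if c = c' then 1 else 0)"
proof (rule hermitian_idempotent_full_trace_eq_id[OF finC _ _ _ assms(5,6)])
  show "(\<Sum>i\<in>I. f i v * cnj (f i u)) = cnj (\<Sum>i\<in>I. f i u * cnj (f i v))" for u v
    by (simp add: cnj_sum mult.commute)
  show "(\<Sum>w\<in>C. (\<Sum>i\<in>I. f i u * cnj (f i w)) * (\<Sum>j\<in>I. f j w * cnj (f j v))) = (\<Sum>i\<in>I. f i u * cnj (f i v))" for u v
  proof -
    have "(\<Sum>w\<in>C. (\<Sum>i\<in>I. f i u * cnj (f i w)) * (\<Sum>j\<in>I. f j w * cnj (f j v)))
        = (\<Sum>i\<in>I. \<Sum>j\<in>I. f i u * cnj (f j v) * (\<Sum>w\<in>C. cnj (f i w) * f j w))"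
      by (simp add: sum_product sum_distrib_left sum.swap[where A = C] mult_ac)
    also have "\<dots> = (\<Sum>i\<in>I. \<Sum>j\<in>I. if i = j then f i u * cnj (f j v) else 0)"
      by (intro sum.cong refl) (simp add: orth)
    also have "\<dots> = (\<Sum>i\<in>I. f i u * cnj (f i v))"
      by (simp add: finI)
    finally show ?thesis .
  qed
  have "(\<Sum>u\<in>C. \<Sum>i\<in>I. f i u * cnj (f i u)) = (\<Sum>i\<in>I. \<Sum>u\<in>C. cnj (f i u) * f i u)"
    by (subst sum.swap) (simp add: mult.commute)
  also have "\<dots> = of_nat (card C)"
    using card by (simp add: orth)
  finally show "(\<Sum>u\<in>C. \<Sum>i\<in>I. f i u * cnj (f i u)) = of_nat (card C)" .
qed

lemma unitary_C_change_of_basis: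
  assumes f_orth: "\<And>p q. p \<in> P \<Longrightarrow> q \<in> P \<Longrightarrow> (\<Sum>c\<in>CLabels d. cnj (f p c) * f q c) = (if p = q then 1 else 0)"
    and g_orth: "\<And>p q. p \<in> P \<Longrightarrow> q \<in> P \<Longrightarrow> (\<Sum>c\<in>CLabels d. cnj (g p c) * g q c) = (if p = q then 1 else 0)"
    and f_complete: "\<And>c c'. c \<in> CLabels d \<Longrightarrow> c' \<in> CLabels d \<Longrightarrow> (\<Sum>p\<in>P. f p c * cnj (f p c')) = (if c = c' then 1 else 0)"
    and g_complete: "\<And>c c'. c \<in> CLabels d \<Longrightarrow> c' \<in> CLabels d \<Longrightarrow> (\<Sum>p\<in>P. g p c * cnj (g p c')) = (if c = c' then 1 else 0)"
    and "finite P"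
  shows "unitary_C d (\<lambda>c' c. \<Sum>p\<in>P. f p c' * g p c)"
proof -
  let ?C = "CLabels d"
  have cols: "(\<Sum>m\<in>?C. cnj (\<Sum>p\<in>P. f p m * g p a) * (\<Sum>p\<in>P. f p m * g p b)) = (if a = b then 1 else 0)"
    if "a \<in> ?C" "b \<in> ?C" for a b
  proof -
    have "(\<Sum>m\<in>?C. cnj (\<Sum>p\<in>P. f p m * g p a) * (\<Sum>p\<in>P. f p m * g p b))
        = (\<Sum>p\<in>P. \<Sum>q\<in>P. cnj (g p a) * g q b * (\<Sum>m\<in>?C. cnj (f p m) * f q m))"
      by (simp add: sum_product cnj_sum sum_distrib_left sum.swap[where A = ?C] mult_ac)
    also have "\<dots> = (\<Sum>p\<in>P. \<Sum>q\<in>P. if p = q then cnj (g p a) * g q b else 0)"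
      by (intro sum.cong refl) (simp add: f_orth)
    also have "\<dots> = cnj (\<Sum>p\<in>P. g p a * cnj (g p b))"
      by (simp add: \<open>finite P\<close> cnj_sum mult.commute)
    finally show ?thesis
      using g_complete[OF that] by simp
  qed
  have rows: "(\<Sum>m\<in>?C. (\<Sum>p\<in>P. f p a * g p m) * cnj (\<Sum>p\<in>P. f p b * g p m)) = (if a = b then 1 else 0)"
    if "a \<in> ?C" "b \<in> ?C" for a b
  proof -
    have "(\<Sum>m\<in>?C. (\<Sum>p\<in>P. f p a * g p m) * cnj (\<Sum>p\<in>P. f p b * g p m))
        = (\<Sum>q\<in>P. \<Sum>p\<in>P. f p a * cnj (f q b) * cnj (\<Sum>m\<in>?C. cnj (g p m) * g q m))"
      by (simp add: sum_product cnj_sum sum_distrib_left sum.swap[where A = ?C] mult_ac)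
    also have "\<dots> = (\<Sum>q\<in>P. \<Sum>p\<in>P. if p = q then f p a * cnj (f q b) else 0)"
      by (intro sum.cong refl) (simp add: g_orth)
    also have "\<dots> = (\<Sum>p\<in>P. f p a * cnj (f p b))"
      by (simp add: \<open>finite P\<close>)
    finally show ?thesis
      using f_complete[OF that] by simp
  qed
  show ?thesis
    unfolding unitary_C_def using cols rows by blast
qed

lemma weighted_orthogonal_norm_sum:
  fixes z :: "'r \<Rightarrow> complex" and \<mu> :: "'r \<Rightarrow> 'c \<Rightarrow> real" and \<kappa> :: "'c \<Rightarrow> real"
  assumes "finite R"
    and orth: "\<And>r r'. r \<in> R \<Longrightarrow> r' \<in> R \<Longrightarrow> (\<Sum>c\<in>C. \<kappa> c * \<mu> r c * \<mu> r' c) = (if r = r' then w r else 0)"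
  shows "(\<Sum>c\<in>C. \<kappa> c * (cmod (\<Sum>r\<in>R. z r * of_real (\<mu> r c)))\<^sup>2) = (\<Sum>r\<in>R. (cmod (z r))\<^sup>2 * w r)"
proof -
  have "complex_of_real (\<Sum>c\<in>C. \<kappa> c * (cmod (\<Sum>r\<in>R. z r * of_real (\<mu> r c)))\<^sup>2)
      = (\<Sum>c\<in>C. of_real (\<kappa> c) * ((\<Sum>r\<in>R. z r * of_real (\<mu> r c)) * cnj (\<Sum>r\<in>R. z r * of_real (\<mu> r c))))"
    by (simp only: of_real_sum of_real_mult complex_norm_square)
  also have "\<dots> = (\<Sum>r\<in>R. \<Sum>r'\<in>R. cnj (z r) * z r' * of_real (\<Sum>c\<in>C. \<kappa> c * \<mu> r c * \<mu> r' c))"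
    by (simp add: sum_product cnj_sum sum_distrib_left sum.swap[where A = C] mult_ac)
  also have "\<dots> = (\<Sum>r\<in>R. \<Sum>r'\<in>R. if r = r' then cnj (z r) * z r' * of_real (w r) else 0)"
    by (intro sum.cong refl) (simp add: orth)
  also have "\<dots> = (\<Sum>r\<in>R. cnj (z r) * z r * of_real (w r))"
    by (simp add: \<open>finite R\<close>)
  also have "\<dots> = complex_of_real (\<Sum>r\<in>R. (cmod (z r))\<^sup>2 * w r)"
    by (simp only: of_real_sum of_real_mult complex_norm_square) (simp add: mult_ac)
  finally show ?thesis
    by (simp only: of_real_eq_iff)
qed

lemma weighted_amgm:
  fixes k u v b :: real
  assumes "k \<ge> 0" "b > 0"
  shows "k * u * v \<le> (b * (k * u\<^sup>2) + k * v\<^sup>2 / b) / 2"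
proof -
  have "k * (2 * (b * u) * v) \<le> k * ((b * u)\<^sup>2 + v\<^sup>2)"
    by (rule mult_left_mono[OF sum_squares_bound assms(1)])
  then show ?thesis
    using assms(2) by (simp add: field_simps power2_eq_square)
qed

text \<open>Expanding \<open>|T|\<^sup>2 = T \<cdot> cnj T\<close> in one factor only turns the overlap sum into a pairing of
  \<open>\<phi>\<close> with the combination \<open>H\<close> of the \<open>\<mu>\<^sub>r\<close> whose coefficients are the overlaps themselves.\<close>
lemma sum_norm_overlaps_le_pairing:
  fixes \<phi> :: "'i \<Rightarrow> 'a \<Rightarrow> 'c \<Rightarrow> complex" and \<mu> :: "'r \<Rightarrow> 'a \<Rightarrow> 'c \<Rightarrow> real"
    and \<kappa> :: "'c \<Rightarrow> real"
  assumes \<kappa>_nonneg: "\<And>c. c \<in> C \<Longrightarrow> \<kappa> c \<ge> 0"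
    and T_def: "\<And>i r. T i r = (\<Sum>a\<in>A. \<Sum>c\<in>C. cnj (\<phi> i a c) * of_real (\<kappa> c * \<mu> r a c))"
  shows "(\<Sum>i\<in>I. \<Sum>r\<in>R. (cmod (T i r))\<^sup>2)
           \<le> (\<Sum>i\<in>I. \<Sum>a\<in>A. \<Sum>c\<in>C. \<kappa> c * cmod (\<phi> i a c) * cmod (\<Sum>r\<in>R. cnj (T i r) * of_real (\<mu> r a c)))"
proof -
  define H where "H i a c = (\<Sum>r\<in>R. cnj (T i r) * of_real (\<mu> r a c))" for i a c
  have "complex_of_real ((cmod (T i r))\<^sup>2)
      = (\<Sum>a\<in>A. \<Sum>c\<in>C. cnj (\<phi> i a c) * of_real (\<kappa> c * \<mu> r a c)) * cnj (T i r)" for i r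
    unfolding complex_norm_square by (simp only: T_def)
  then have "complex_of_real (\<Sum>i\<in>I. \<Sum>r\<in>R. (cmod (T i r))\<^sup>2)
      = (\<Sum>i\<in>I. \<Sum>r\<in>R. (\<Sum>a\<in>A. \<Sum>c\<in>C. cnj (\<phi> i a c) * of_real (\<kappa> c * \<mu> r a c)) * cnj (T i r))"
    by (simp only: of_real_sum)
  also have "\<dots> = (\<Sum>i\<in>I. \<Sum>a\<in>A. \<Sum>c\<in>C. cnj (\<phi> i a c) * of_real (\<kappa> c) * H i a c)"
    unfolding H_def by (simp add: sum_distrib_left sum_distrib_right sum.swap[where A = R] mult_ac)
  finally have pairing: "complex_of_real (\<Sum>i\<in>I. \<Sum>r\<in>R. (cmod (T i r))\<^sup>2) = \<dots>" .
  have "(\<Sum>i\<in>I. \<Sum>r\<in>R. (cmod (T i r))\<^sup>2) = cmod (complex_of_real (\<Sum>i\<in>I. \<Sum>r\<in>R. (cmod (T i r))\<^sup>2))"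
    unfolding norm_of_real by (intro abs_of_nonneg[symmetric] sum_nonneg) simp
  also have "\<dots> \<le> (\<Sum>i\<in>I. \<Sum>a\<in>A. \<Sum>c\<in>C. cmod (cnj (\<phi> i a c) * of_real (\<kappa> c) * H i a c))"
    unfolding pairing by (intro order.trans[OF norm_sum sum_mono] norm_sum)
  also have "\<dots> = (\<Sum>i\<in>I. \<Sum>a\<in>A. \<Sum>c\<in>C. \<kappa> c * cmod (\<phi> i a c) * cmod (H i a c))"
    by (intro sum.cong refl) (simp add: norm_mult \<kappa>_nonneg)
  finally show ?thesis
    unfolding H_def .
qed

text \<open>Weighted AM-GM applied to the pairing bounds the overlap sum \<open>N\<close> by \<open>(\<beta> s \<Sum> \<kappa> + N) / 2\<close>,
  because the weighted norm of \<open>H\<close> is \<open>\<beta> N\<close> by the orthogonality relations.\<close>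
lemma sum_weighted_overlaps_le:
  fixes \<phi> :: "'i \<Rightarrow> 'a \<Rightarrow> 'c \<Rightarrow> complex" and \<mu> :: "'r \<Rightarrow> 'a \<Rightarrow> 'c \<Rightarrow> real"
    and \<kappa> :: "'c \<Rightarrow> real"
  assumes fin: "finite I" "finite R" "finite A" "finite C"
    and \<kappa>_nonneg: "\<And>c. c \<in> C \<Longrightarrow> \<kappa> c \<ge> 0"
    and \<phi>_bound: "\<And>c. c \<in> C \<Longrightarrow> (\<Sum>i\<in>I. \<Sum>a\<in>A. (cmod (\<phi> i a c))\<^sup>2) \<le> s"
    and orth: "\<And>a r r'. a \<in> A \<Longrightarrow> r \<in> R \<Longrightarrow> r' \<in> R \<Longrightarrow>
        (\<Sum>c\<in>C. \<kappa> c * \<mu> r a c * \<mu> r' a c) = (if r = r' then w r a else 0)"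
    and w_sum: "\<And>r. r \<in> R \<Longrightarrow> (\<Sum>a\<in>A. w r a) = \<beta>"
    and \<beta>_pos: "\<beta> > 0"
  shows "(\<Sum>i\<in>I. \<Sum>r\<in>R. (cmod (\<Sum>a\<in>A. \<Sum>c\<in>C. cnj (\<phi> i a c) * of_real (\<kappa> c * \<mu> r a c)))\<^sup>2)
           \<le> s * \<beta> * (\<Sum>c\<in>C. \<kappa> c)"
proof -
  define T where "T i r = (\<Sum>a\<in>A. \<Sum>c\<in>C. cnj (\<phi> i a c) * of_real (\<kappa> c * \<mu> r a c))" for i r
  define H where "H i a c = (\<Sum>r\<in>R. cnj (T i r) * of_real (\<mu> r a c))" for i a c
  define N where "N = (\<Sum>i\<in>I. \<Sum>r\<in>R. (cmod (T i r))\<^sup>2)"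
  define S\<phi> where "S\<phi> = (\<Sum>i\<in>I. \<Sum>a\<in>A. \<Sum>c\<in>C. \<kappa> c * (cmod (\<phi> i a c))\<^sup>2)"
  define SH where "SH = (\<Sum>i\<in>I. \<Sum>a\<in>A. \<Sum>c\<in>C. \<kappa> c * (cmod (H i a c))\<^sup>2)"
  have "N \<le> (\<Sum>i\<in>I. \<Sum>a\<in>A. \<Sum>c\<in>C. \<kappa> c * cmod (\<phi> i a c) * cmod (H i a c))"
    unfolding N_def H_def using \<kappa>_nonneg T_def by (rule sum_norm_overlaps_le_pairing)
  also have "\<dots> \<le> (\<Sum>i\<in>I. \<Sum>a\<in>A. \<Sum>c\<in>C.
      (\<beta> * (\<kappa> c * (cmod (\<phi> i a c))\<^sup>2) + \<kappa> c * (cmod (H i a c))\<^sup>2 / \<beta>) / 2)"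
    using \<kappa>_nonneg \<beta>_pos by (intro sum_mono weighted_amgm) auto
  also have "\<dots> = (\<beta> * S\<phi> + SH / \<beta>) / 2"
    unfolding S\<phi>_def SH_def by (simp add: sum.distrib sum_divide_distrib sum_distrib_left add_divide_distrib)
  finally have N_le: "N \<le> (\<beta> * S\<phi> + SH / \<beta>) / 2" .
  have "S\<phi> = (\<Sum>c\<in>C. \<kappa> c * (\<Sum>i\<in>I. \<Sum>a\<in>A. (cmod (\<phi> i a c))\<^sup>2))"
    unfolding S\<phi>_def by (simp add: sum_distrib_left sum.swap[where B = C])
  also have "\<dots> \<le> (\<Sum>c\<in>C. \<kappa> c * s)"
    by (intro sum_mono mult_left_mono \<phi>_bound \<kappa>_nonneg)
  finally have S\<phi>_le: "S\<phi> \<le> s * (\<Sum>c\<in>C. \<kappa> c)"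
    by (simp add: sum_distrib_left mult.commute)
  have "SH = (\<Sum>i\<in>I. \<Sum>a\<in>A. \<Sum>r\<in>R. (cmod (T i r))\<^sup>2 * w r a)"
    unfolding SH_def H_def
    by (intro sum.cong refl) (subst weighted_orthogonal_norm_sum[OF fin(2)], auto simp: orth)
  also have "\<dots> = (\<Sum>i\<in>I. \<Sum>r\<in>R. (cmod (T i r))\<^sup>2 * (\<Sum>a\<in>A. w r a))"
    by (simp add: sum_distrib_left sum.swap[where A = A])
  also have "\<dots> = \<beta> * N"
    unfolding N_def by (simp add: w_sum sum_distrib_left mult.commute)
  finally have "SH = \<beta> * N" .
  with N_le \<beta>_pos have "N \<le> \<beta> * S\<phi>"
    by (simp add: field_simps)
  also have "\<dots> \<le> \<beta> * (s * (\<Sum>c\<in>C. \<kappa> c))"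
    using S\<phi>_le \<beta>_pos by simp
  finally show ?thesis
    unfolding N_def T_def by (simp add: mult_ac)
qed

section \<open>Expectation values on the bipartite space\<close>

lemma sum_swap_pairs:
  "(\<Sum>x\<in>A. \<Sum>y\<in>B. \<Sum>z\<in>C. \<Sum>w\<in>D. f x y z w) = (\<Sum>z\<in>C. \<Sum>w\<in>D. \<Sum>x\<in>A. \<Sum>y\<in>B. f x y z w)"
  using sum.swap[where g = "\<lambda>p q. f (fst p) (snd p) (fst q) (snd q)" and A = "A \<times> B" and B = "C \<times> D"]
  by (simp add: sum.cartesian_product')

definition apply_IV_adjoint ::
    "nat \<Rightarrow> (label \<Rightarrow> label \<Rightarrow> complex) \<Rightarrow> (nat \<Rightarrow> label \<Rightarrow> complex) \<Rightarrow> nat \<Rightarrow> label \<Rightarrow> complex" where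
  "apply_IV_adjoint d V \<psi> a c = (\<Sum>c'\<in>CLabels d. cnj (V c' c) * \<psi> a c')"

lemma expect_conj_IV:
  "expect d (conj_IV d V M) \<psi> = expect d M (apply_IV_adjoint d V \<psi>)"
proof -
  let ?A = "{1..d}" and ?C = "CLabels d"
  have "expect d (conj_IV d V M) \<psi> = (\<Sum>a\<in>?A. \<Sum>b\<in>?A. \<Sum>c'\<in>?C. \<Sum>c''\<in>?C. \<Sum>c1\<in>?C. \<Sum>c2\<in>?C.
      cnj (\<psi> a c') * V c' c1 * M (a, c1) (b, c2) * cnj (V c'' c2) * \<psi> b c'')"
    unfolding expect_def conj_IV_def
    by (simp del: One_nat_def add: sum.cartesian_product' sum_distrib_left sum_distrib_right mult_ac sum.swap[where A = ?C and B = ?A])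
  also have "\<dots> = (\<Sum>a\<in>?A. \<Sum>b\<in>?A. \<Sum>c1\<in>?C. \<Sum>c2\<in>?C. \<Sum>c'\<in>?C. \<Sum>c''\<in>?C.
      cnj (\<psi> a c') * V c' c1 * M (a, c1) (b, c2) * cnj (V c'' c2) * \<psi> b c'')"
    by (rule sum.cong[OF refl], rule sum.cong[OF refl], rule sum_swap_pairs)
  also have "\<dots> = expect d M (apply_IV_adjoint d V \<psi>)"
    unfolding expect_def apply_IV_adjoint_def
    by (simp del: One_nat_def add: sum.cartesian_product' sum_distrib_left sum_distrib_right mult_ac sum.swap[where A = ?C and B = ?A])
  finally show ?thesis .
qed

definition inner_AC :: "nat \<Rightarrow> (nat \<Rightarrow> label \<Rightarrow> complex) \<Rightarrow> (nat \<Rightarrow> label \<Rightarrow> complex) \<Rightarrow> complex" where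
  "inner_AC d \<phi> \<psi> = (\<Sum>p\<in>{1..d} \<times> CLabels d. cnj (\<phi> (fst p) (snd p)) * \<psi> (fst p) (snd p))"

lemma expect_rhoAC:
  "expect d (rhoAC d x) \<phi> = of_real ((\<Sum>r\<in>{1..d}. (cmod (inner_AC d \<phi> (Psi d x r)))\<^sup>2) / real d)"
proof -
  have "expect d (rhoAC d x) \<phi> = (\<Sum>r\<in>{1..d}. inner_AC d \<phi> (Psi d x r) * cnj (inner_AC d \<phi> (Psi d x r))) / of_nat d"
    unfolding expect_def rhoAC_def inner_AC_def
    by (simp del: One_nat_def add: sum_product sum_distrib_left sum_distrib_right sum_divide_distrib
                  cnj_sum sum.swap[where B = "{1..d}"] mult_ac)
  then show ?thesis
    by (simp only: of_real_divide of_real_sum complex_norm_square of_real_of_nat_eq)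
qed

definition fef_objective ::
    "nat \<Rightarrow> (nat \<Rightarrow> label \<Rightarrow> complex) \<Rightarrow> ((nat \<times> label) \<Rightarrow> (nat \<times> label) \<Rightarrow> complex)
       \<Rightarrow> (label \<Rightarrow> label \<Rightarrow> complex) \<Rightarrow> real" where
  "fef_objective d e M V = Re (\<Sum>i\<in>{1..d}. expect d (conj_IV d V M) (psi_max d e i))"

lemma fef_objective_rhoAC:
  "fef_objective d e (rhoAC d x) V
     = (\<Sum>i\<in>{1..d}. \<Sum>r\<in>{1..d}. (cmod (inner_AC d (apply_IV_adjoint d V (psi_max d e i)) (Psi d x r)))\<^sup>2) / real d"
  unfolding fef_objective_def expect_conj_IV expect_rhoAC
  by (simp add: sum_divide_distrib flip: of_real_sum)

section \<open>The bases \<open>e\<close> and \<open>\<mu>\<close>\<close>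

lemma finite_CLabels: "finite (CLabels d)"
proof -
  have "CLabels d \<subseteq> UNIV \<times> {0..d} \<times> {0..d}"
    unfolding CLabels_def by auto
  then show ?thesis
    by (rule finite_subset) auto
qed

lemma card_CLabels: "card (CLabels d) = d * d"
proof -
  define g where "g p = (if fst p \<le> snd p then (True, fst p, snd p) else (False, snd p, fst p))" for p :: "nat \<times> nat"
  have "bij_betw g ({1..d} \<times> {1..d}) (CLabels d)"
  proof (rule bij_betwI')
    fix p q assume "p \<in> {1..d} \<times> {1..d}" "q \<in> {1..d} \<times> {1..d}"
    then show "g p = g q \<longleftrightarrow> p = q"
      unfolding g_def by (cases p, cases q) (auto split: if_splits)
  next
    fix p assume "p \<in> {1..d} \<times> {1..d}"
    then show "g p \<in> CLabels d"
      unfolding g_def CLabels_def by (cases p) auto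
  next
    fix y assume "y \<in> CLabels d"
    then consider (sym) k l where "y = (True, k, l)" "1 \<le> k" "k \<le> l" "l \<le> d"
      | (antisym) k l where "y = (False, k, l)" "1 \<le> k" "k < l" "l \<le> d"
      unfolding CLabels_def by auto
    then show "\<exists>p \<in> {1..d} \<times> {1..d}. y = g p"
    proof cases
      case sym
      then show ?thesis
        by (intro bexI[of _ "(k, l)"]) (auto simp: g_def)
    next
      case antisym
      then show ?thesis
        by (intro bexI[of _ "(l, k)"]) (auto simp: g_def)
    qed
  qed
  then show ?thesis
    by (simp add: bij_betw_same_card[symmetric])
qed

lemma add_mult_eq_add_mult_iff:
  fixes r q r' q' d :: nat
  assumes "r < d" "r' < d"
  shows "r + q * d = r' + q' * d \<longleftrightarrow> r = r' \<and> q = q'"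
proof
  assume eq: "r + q * d = r' + q' * d"
  have "(r + q * d) div d = q" "(r + q * d) mod d = r" "(r' + q' * d) div d = q'" "(r' + q' * d) mod d = r'"
    using assms by simp_all
  then show "r = r' \<and> q = q'"
    using eq by metis
qed simp

definition onb_pair :: "nat \<Rightarrow> (nat \<Rightarrow> label \<Rightarrow> complex) \<Rightarrow> nat \<times> nat \<Rightarrow> label \<Rightarrow> complex" where
  "onb_pair d e p = e (fst p + (snd p - 1) * d)"

lemma onb_pair_orthonormal:
  assumes "onb_C d e" "p \<in> {1..d} \<times> {1..d}" "q \<in> {1..d} \<times> {1..d}"
  shows "(\<Sum>c\<in>CLabels d. cnj (onb_pair d e p c) * onb_pair d e q c) = (if p = q then 1 else 0)"
proof -
  have index_range: "a + (i - 1) * d \<in> {1..d\<^sup>2}" if "a \<in> {1..d}" "i \<in> {1..d}" for a i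
  proof -
    have "a + (i - 1) * d \<le> d + (d - 1) * d"
      using that by (intro add_mono mult_right_mono) auto
    also have "\<dots> = d\<^sup>2"
      using that by (cases d) (auto simp: power2_eq_square)
    finally show ?thesis
      using that by simp
  qed
  have index_inj: "a + (i - 1) * d = b + (j - 1) * d \<longleftrightarrow> (a, i) = (b, j)"
    if "a \<in> {1..d}" "i \<in> {1..d}" "b \<in> {1..d}" "j \<in> {1..d}" for a i b j
  proof -
    have "a + (i - 1) * d = b + (j - 1) * d \<longleftrightarrow> (a - 1) + (i - 1) * d = (b - 1) + (j - 1) * d"
      using that by auto
    also have "\<dots> \<longleftrightarrow> a - 1 = b - 1 \<and> i - 1 = j - 1"
      using that by (intro add_mult_eq_add_mult_iff) auto
    also have "\<dots> \<longleftrightarrow> (a, i) = (b, j)"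
      using that by auto
    finally show ?thesis .
  qed
  show ?thesis
    using assms index_range index_inj unfolding onb_C_def onb_pair_def
    by (cases p, cases q) (auto simp del: One_nat_def)
qed

lemma onb_pair_complete:
  assumes "onb_C d e" "c \<in> CLabels d" "c' \<in> CLabels d"
  shows "(\<Sum>p\<in>{1..d} \<times> {1..d}. onb_pair d e p c * cnj (onb_pair d e p c')) = (if c = c' then 1 else 0)"
  using assms onb_pair_orthonormal card_CLabels finite_CLabels
  by (intro orthonormal_family_complete) auto

lemma onb_pair_parseval:
  assumes "onb_C d e"
  shows "(\<Sum>p\<in>{1..d} \<times> {1..d}. (cmod (\<Sum>c\<in>CLabels d. v c * onb_pair d e p c))\<^sup>2)
           = (\<Sum>c\<in>CLabels d. (cmod (v c))\<^sup>2)"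
proof -
  let ?P = "{1..d} \<times> {1..d}" and ?C = "CLabels d"
  have "complex_of_real (\<Sum>p\<in>?P. (cmod (\<Sum>c\<in>?C. v c * onb_pair d e p c))\<^sup>2)
      = (\<Sum>c\<in>?C. \<Sum>c'\<in>?C. cnj (v c) * v c' * (\<Sum>p\<in>?P. onb_pair d e p c' * cnj (onb_pair d e p c)))"
    by (simp only: of_real_sum complex_norm_square)
       (simp del: One_nat_def add: sum_product cnj_sum sum_distrib_left sum.swap[where A = ?P] mult_ac)
  also have "\<dots> = (\<Sum>c\<in>?C. \<Sum>c'\<in>?C. if c = c' then cnj (v c) * v c' else 0)"
    by (intro sum.cong refl) (simp del: One_nat_def add: onb_pair_complete[OF assms])
  also have "\<dots> = (\<Sum>c\<in>?C. v c * cnj (v c))"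
    by (simp add: finite_CLabels mult.commute)
  also have "\<dots> = complex_of_real (\<Sum>c\<in>?C. (cmod (v c))\<^sup>2)"
    by (simp only: of_real_sum complex_norm_square)
  finally show ?thesis
    by (simp only: of_real_eq_iff)
qed

lemma sum_norm_apply_IV_adjoint_psi_max:
  assumes "unitary_C d V" "onb_C d e" "c \<in> CLabels d"
  shows "(\<Sum>i\<in>{1..d}. \<Sum>a\<in>{1..d}. (cmod (apply_IV_adjoint d V (psi_max d e i) a c))\<^sup>2) = 1 / real d"
proof -
  let ?g = "\<lambda>p. (cmod (\<Sum>c'\<in>CLabels d. cnj (V c' c) * onb_pair d e p c'))\<^sup>2"
  have "(cmod (apply_IV_adjoint d V (psi_max d e i) a c))\<^sup>2 = ?g (a, i) / real d"
    if "a \<in> {1..d}" for a i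
  proof -
    have "apply_IV_adjoint d V (psi_max d e i) a c
        = of_real (1 / sqrt (real d)) * (\<Sum>c'\<in>CLabels d. cnj (V c' c) * onb_pair d e (a, i) c')"
      using that unfolding apply_IV_adjoint_def psi_max_def onb_pair_def
      by (simp add: sum_distrib_left mult_ac)
    then show ?thesis
      by (simp add: norm_divide power_divide)
  qed
  then have "(\<Sum>i\<in>{1..d}. \<Sum>a\<in>{1..d}. (cmod (apply_IV_adjoint d V (psi_max d e i) a c))\<^sup>2)
      = (\<Sum>i\<in>{1..d}. \<Sum>a\<in>{1..d}. ?g (a, i) / real d)"
    by (intro sum.cong refl) auto
  also have "\<dots> = (\<Sum>p\<in>{1..d} \<times> {1..d}. ?g p) / real d"
    by (subst sum.swap) (simp only: sum.cartesian_product' sum_divide_distrib)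
  also have "\<dots> = (\<Sum>c'\<in>CLabels d. (cmod (V c' c))\<^sup>2) / real d"
    by (simp del: One_nat_def add: onb_pair_parseval[OF assms(2)])
  also have "\<dots> = 1 / real d"
  proof -
    have "complex_of_real (\<Sum>c'\<in>CLabels d. (cmod (V c' c))\<^sup>2) = (\<Sum>c'\<in>CLabels d. cnj (V c' c) * V c' c)"
      by (simp only: of_real_sum complex_norm_square mult.commute)
    also have "\<dots> = 1"
      using assms(1,3) unfolding unitary_C_def by simp
    finally show ?thesis
      by (metis of_real_eq_1_iff)
  qed
  finally show ?thesis .
qed

definition label_weight :: "real \<Rightarrow> real \<Rightarrow> label \<Rightarrow> real" where
  "label_weight p m c = (if fst c then p else m)"

definition mu_re :: "nat \<Rightarrow> nat \<Rightarrow> label \<Rightarrow> real" where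
  "mu_re r k c = Re (mu_r r k c)"

lemma mu_r_real: "mu_r r k c = complex_of_real (mu_re r k c)"
  unfolding mu_re_def mu_r_def basis_vec_def by (simp add: complex_eq_iff)

lemma mu_re_eq:
  "mu_re r k c = (if k = r then 1 else 1 / sqrt 2) * of_bool (c = (True, min r k, max r k))
     + (if k = r then 0 else if k < r then 1 / sqrt 2 else - 1 / sqrt 2) * of_bool (c = (False, min r k, max r k))"
  unfolding mu_re_def mu_r_def basis_vec_def by (auto simp: min_def max_def)

lemma sum_mult_of_bool_eq:
  fixes h :: "'a \<Rightarrow> 'b::semiring_1"
  assumes "finite C"
  shows "(\<Sum>c\<in>C. h c * of_bool (c = l)) = of_bool (l \<in> C) * h l"
  using assms by (simp add: sum.delta')

lemma sum_two_labels:
  fixes g :: "label \<Rightarrow> real"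
  assumes "finite C"
  shows "(\<Sum>c\<in>C. g c * (p1 * of_bool (c = (True, u)) + p2 * of_bool (c = (False, u)))
                    * (q1 * of_bool (c = (True, v)) + q2 * of_bool (c = (False, v))))
       = of_bool (u = v) * (of_bool ((True, u) \<in> C) * g (True, u) * p1 * q1
                            + of_bool ((False, u) \<in> C) * g (False, u) * p2 * q2)"
proof -
  have "(\<Sum>c\<in>C. g c * (p1 * of_bool (c = (True, u)) + p2 * of_bool (c = (False, u)))
                   * (q1 * of_bool (c = (True, v)) + q2 * of_bool (c = (False, v))))
      = (\<Sum>c\<in>C. of_bool (u = v) * g c * p1 * q1 * of_bool (c = (True, u)))
        + (\<Sum>c\<in>C. of_bool (u = v) * g c * p2 * q2 * of_bool (c = (False, u)))"
    by (subst sum.distrib[symmetric], rule sum.cong) auto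
  then show ?thesis
    by (simp only: sum_mult_of_bool_eq[OF assms]) (simp add: algebra_simps)
qed

lemma sum_label_weight_mu_re:
  assumes "i \<in> {1..d}" "a \<in> {1..d}" "j \<in> {1..d}" "a' \<in> {1..d}"
  shows "(\<Sum>c\<in>CLabels d. label_weight p m c * mu_re i a c * mu_re j a' c) =
    (if (i, a) = (j, a') then (if i = a then p else (p + m) / 2)
     else if (i, a) = (a', j) then (p - m) / 2 else 0)"
proof -
  have mem: "(True, min i a, max i a) \<in> CLabels d" "(False, min i a, max i a) \<in> CLabels d \<longleftrightarrow> i \<noteq> a"
    using assms unfolding CLabels_def by (auto simp: min_def max_def)
  have half: "1 / sqrt 2 * (1 / sqrt 2) = (1 / 2 :: real)"
    by (simp flip: real_sqrt_mult)
  have same_pair: "(min i a, max i a) = (min j a', max j a') \<longleftrightarrow> (i, a) = (j, a') \<or> (i, a) = (a', j)"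
    by (auto simp: min_def max_def)
  let ?s = "\<lambda>r k. if k = r then 1 else 1 / sqrt 2 :: real"
  let ?t = "\<lambda>r k. if k = r then 0 else if k < r then 1 / sqrt 2 else - 1 / sqrt 2 :: real"
  have "(\<Sum>c\<in>CLabels d. label_weight p m c * mu_re i a c * mu_re j a' c)
      = of_bool ((min i a, max i a) = (min j a', max j a'))
         * (p * ?s i a * ?s j a' + of_bool (i \<noteq> a) * m * ?t i a * ?t j a')"
    unfolding mu_re_eq[of i a] mu_re_eq[of j a']
    by (subst sum_two_labels[OF finite_CLabels])
       (simp only: mem of_bool_eq label_weight_def fst_conv if_True if_False mult_1_left)
  also have "\<dots> = (if (i, a) = (j, a') then (if i = a then p else (p + m) / 2)
     else if (i, a) = (a', j) then (p - m) / 2 else 0)"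
  proof (cases "(i, a) = (j, a')")
    case True
    then show ?thesis
      using half by (cases "i = a") (auto simp: field_simps)
  next
    case different: False
    show ?thesis
    proof (cases "(i, a) = (a', j)")
      case True
      with different have "i \<noteq> a"
        by auto
      with True show ?thesis
        using half by (cases "a < i") (auto simp: field_simps)
    next
      case False
      with different same_pair have "(min i a, max i a) \<noteq> (min j a', max j a')"
        by blast
      with different False show ?thesis
        by (simp only: if_False of_bool_eq mult_zero_left)
    qed
  qed
  finally show ?thesis .
qed

definition mu_pair :: "nat \<times> nat \<Rightarrow> label \<Rightarrow> complex" where
  "mu_pair p c = complex_of_real (mu_re (snd p) (fst p) c)"

lemma mu_pair_orthonormal:
  assumes "p \<in> {1..d} \<times> {1..d}" "q \<in> {1..d} \<times> {1..d}"
  shows "(\<Sum>c\<in>CLabels d. cnj (mu_pair p c) * mu_pair q c) = (if p = q then 1 else 0)"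
proof -
  have "(\<Sum>c\<in>CLabels d. label_weight 1 1 c * mu_re (snd p) (fst p) c * mu_re (snd q) (fst q) c)
      = (if p = q then 1 else 0)"
    using assms by (subst sum_label_weight_mu_re) (auto simp: prod_eq_iff)
  then show ?thesis
    unfolding mu_pair_def label_weight_def by (simp flip: of_real_mult of_real_sum)
qed

lemma mu_pair_complete:
  assumes "c \<in> CLabels d" "c' \<in> CLabels d"
  shows "(\<Sum>p\<in>{1..d} \<times> {1..d}. mu_pair p c * cnj (mu_pair p c')) = (if c = c' then 1 else 0)"
  using assms mu_pair_orthonormal card_CLabels finite_CLabels
  by (intro orthonormal_family_complete) auto

section \<open>The states \<open>\<Psi>\<^sub>r\<close>\<close>

definition kappa_plus :: "nat \<Rightarrow> real \<Rightarrow> real" where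
  "kappa_plus d x = sqrt (real d * lam_plus d x)"

definition kappa_minus :: "nat \<Rightarrow> real \<Rightarrow> real" where
  "kappa_minus d x = sqrt (real d * lam_minus d x)"

lemma cos_sin_arccos_sqrt:
  assumes "0 \<le> y" "y \<le> 1"
  shows "cos (arccos (sqrt y)) = sqrt y" "sin (arccos (sqrt y)) = sqrt (1 - y)"
proof -
  have "-1 \<le> sqrt y" "sqrt y \<le> 1"
    using assms by (auto intro: order.trans[of _ 0])
  then show "cos (arccos (sqrt y)) = sqrt y" "sin (arccos (sqrt y)) = sqrt (1 - y)"
    using assms by (simp_all add: cos_arccos sin_arccos)
qed

lemma one_minus_d_lam_plus:
  assumes "d \<ge> 2"
  shows "1 - real d * lam_plus d x = real d * (real d - 1) * (lam_plus d x + lam_minus d x) / 2"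
proof -
  have ne: "real d \<noteq> 0" "real d + 1 \<noteq> 0" "real d - 1 \<noteq> 0"
    using assms by auto
  have plus: "real d * lam_plus d x = (1 + x) / (real d + 1)"
    unfolding lam_plus_def using ne by simp
  have minus: "real d * (real d - 1) * lam_minus d x = 1 - x"
    unfolding lam_minus_def using ne by simp
  have "real d * (real d - 1) * (lam_plus d x + lam_minus d x)
      = (real d - 1) * (real d * lam_plus d x) + real d * (real d - 1) * lam_minus d x"
    by (simp only: distrib_left mult_ac)
  also have "\<dots> = (real d - 1) * ((1 + x) / (real d + 1)) + (1 - x)"
    unfolding plus minus ..
  finally show ?thesis
    unfolding plus using ne by (simp add: field_simps)
qed

lemma lam_nonneg:
  assumes "d \<ge> 2" "-1 \<le> x" "x \<le> 1"
  shows "lam_plus d x \<ge> 0" "lam_minus d x \<ge> 0"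
  using assms unfolding lam_plus_def lam_minus_def by auto

lemma lam_sum_pos:
  assumes "d \<ge> 2" "-1 \<le> x" "x \<le> 1"
  shows "lam_plus d x + lam_minus d x > 0"
proof (cases "x = 1")
  case True
  then have "lam_plus d x > 0"
    using assms unfolding lam_plus_def by simp
  then show ?thesis
    using lam_nonneg[OF assms] by simp
next
  case False
  then have "lam_minus d x > 0"
    using assms unfolding lam_minus_def by simp
  then show ?thesis
    using lam_nonneg[OF assms] by simp
qed

lemma cos_sin_alpha_ang:
  assumes "d \<ge> 2" "-1 \<le> x" "x \<le> 1"
  shows "cos (alpha_ang d x) = sqrt (real d * lam_plus d x)"
    and "sin (alpha_ang d x) = sqrt (1 - real d * lam_plus d x)"
proof -
  have "real d * (real d - 1) * (lam_plus d x + lam_minus d x) / 2 \<ge> 0"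
    using assms lam_sum_pos[OF assms] by simp
  then have "real d * lam_plus d x \<le> 1"
    using one_minus_d_lam_plus[OF assms(1), of x] by linarith
  then show "cos (alpha_ang d x) = sqrt (real d * lam_plus d x)"
    and "sin (alpha_ang d x) = sqrt (1 - real d * lam_plus d x)"
    using lam_nonneg[OF assms] unfolding alpha_ang_def by (simp_all add: cos_sin_arccos_sqrt)
qed

lemma cos_sin_theta_ang:
  assumes "d \<ge> 2" "-1 \<le> x" "x \<le> 1"
  shows "cos (theta_ang d x) = sqrt (lam_plus d x / (lam_plus d x + lam_minus d x))"
    and "sin (theta_ang d x) = sqrt (lam_minus d x / (lam_plus d x + lam_minus d x))"
proof -
  have "1 - lam_plus d x / (lam_plus d x + lam_minus d x) = lam_minus d x / (lam_plus d x + lam_minus d x)"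
    using lam_sum_pos[OF assms] by (simp add: field_simps)
  then show "cos (theta_ang d x) = sqrt (lam_plus d x / (lam_plus d x + lam_minus d x))"
    and "sin (theta_ang d x) = sqrt (lam_minus d x / (lam_plus d x + lam_minus d x))"
    using lam_nonneg[OF assms] lam_sum_pos[OF assms] unfolding theta_ang_def
    by (simp_all add: cos_sin_arccos_sqrt)
qed

text \<open>This is where the angles \<open>\<alpha>\<close> and \<open>\<theta>\<close> come from: \<open>1 - d \<lambda>\<^sub>+ = d (d - 1) (\<lambda>\<^sub>+ + \<lambda>\<^sub>-) / 2\<close>
  makes \<open>sin \<alpha> / \<surd>(d - 1)\<close> times \<open>cos \<theta>\<close> resp. \<open>sin \<theta>\<close> equal to \<open>\<surd>(d \<lambda>\<^sub>\<plusminus> / 2)\<close>.\<close>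
lemma Psi_angle_coefficients:
  assumes "d \<ge> 2" "-1 \<le> x" "x \<le> 1"
  shows "cos (alpha_ang d x) = kappa_plus d x"
    and "sin (alpha_ang d x) / sqrt (real d - 1) * cos (theta_ang d x) = kappa_plus d x / sqrt 2"
    and "sin (alpha_ang d x) / sqrt (real d - 1) * sin (theta_ang d x) = kappa_minus d x / sqrt 2"
proof -
  let ?S = "lam_plus d x + lam_minus d x"
  have "sin (alpha_ang d x) / sqrt (real d - 1) * sqrt (l / ?S) = sqrt (real d * l / 2)" for l
  proof -
    have cancel: "D * A * B / 2 / A * (l / B) = D * l / 2" if "A \<noteq> 0" "B \<noteq> 0" for D A B :: real
      using that by (simp add: field_simps)
    have "(1 - real d * lam_plus d x) / (real d - 1) * (l / ?S) = real d * l / 2"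
      unfolding one_minus_d_lam_plus[OF assms(1)] by (rule cancel) (use assms lam_sum_pos[OF assms] in auto)
    then show ?thesis
      unfolding cos_sin_alpha_ang[OF assms] by (simp flip: real_sqrt_divide real_sqrt_mult)
  qed
  then show "sin (alpha_ang d x) / sqrt (real d - 1) * cos (theta_ang d x) = kappa_plus d x / sqrt 2"
    and "sin (alpha_ang d x) / sqrt (real d - 1) * sin (theta_ang d x) = kappa_minus d x / sqrt 2"
    unfolding cos_sin_theta_ang[OF assms] kappa_plus_def kappa_minus_def
    by (simp_all add: real_sqrt_divide)
  show "cos (alpha_ang d x) = kappa_plus d x"
    unfolding cos_sin_alpha_ang[OF assms] kappa_plus_def ..
qed

definition Psi_weight :: "nat \<Rightarrow> real \<Rightarrow> label \<Rightarrow> real" where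
  "Psi_weight d x = label_weight (kappa_plus d x) (kappa_minus d x)"

lemma Psi_eq:
  assumes "d \<ge> 2" "-1 \<le> x" "x \<le> 1" "r \<in> {1..d}" "a \<in> {1..d}"
  shows "Psi d x r a c = complex_of_real (Psi_weight d x c * mu_re r a c)"
proof -
  let ?sa = "complex_of_real (sin (alpha_ang d x) / sqrt (real d - 1))"
  have ca: "complex_of_real (cos (alpha_ang d x)) = complex_of_real (kappa_plus d x)"
    using Psi_angle_coefficients(1)[OF assms(1-3)] by simp
  have sa_ct: "?sa * complex_of_real (cos (theta_ang d x)) = complex_of_real (kappa_plus d x / sqrt 2)"
    unfolding of_real_mult[symmetric] Psi_angle_coefficients(2)[OF assms(1-3)] ..
  have sa_st: "?sa * complex_of_real (sin (theta_ang d x)) = complex_of_real (kappa_minus d x / sqrt 2)"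
    unfolding of_real_mult[symmetric] Psi_angle_coefficients(3)[OF assms(1-3)] ..
  consider "a = r" | "a < r" | "r < a"
    by linarith
  then show ?thesis
  proof cases
    case 1
    then show ?thesis
      by (simp add: Psi_def ca Psi_weight_def label_weight_def mu_re_eq basis_vec_def)
  next
    case 2
    then have "Psi d x r a c = ?sa * (complex_of_real (cos (theta_ang d x)) * basis_vec (True, a, r) c
                                  + complex_of_real (sin (theta_ang d x)) * basis_vec (False, a, r) c)"
      using assms by (simp add: Psi_def Let_def)
    also have "\<dots> = complex_of_real (kappa_plus d x / sqrt 2) * basis_vec (True, a, r) c
                   + complex_of_real (kappa_minus d x / sqrt 2) * basis_vec (False, a, r) c"
      by (simp only: distrib_left mult.assoc[symmetric] sa_ct sa_st)
    finally show ?thesis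
      using 2 by (auto simp: basis_vec_def Psi_weight_def label_weight_def mu_re_eq)
  next
    case 3
    then have "Psi d x r a c = ?sa * (complex_of_real (cos (theta_ang d x)) * basis_vec (True, r, a) c
                                  - complex_of_real (sin (theta_ang d x)) * basis_vec (False, r, a) c)"
      using assms by (simp add: Psi_def Let_def)
    also have "\<dots> = complex_of_real (kappa_plus d x / sqrt 2) * basis_vec (True, r, a) c
                   - complex_of_real (kappa_minus d x / sqrt 2) * basis_vec (False, r, a) c"
      by (simp only: right_diff_distrib mult.assoc[symmetric] sa_ct sa_st)
    finally show ?thesis
      using 3 by (auto simp: basis_vec_def Psi_weight_def label_weight_def mu_re_eq)
  qed
qed

lemma kappa_nonneg:
  assumes "d \<ge> 2" "-1 \<le> x" "x \<le> 1"
  shows "kappa_plus d x \<ge> 0" "kappa_minus d x \<ge> 0"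
  using lam_nonneg[OF assms] unfolding kappa_plus_def kappa_minus_def by auto

lemma Psi_weight_nonneg:
  assumes "d \<ge> 2" "-1 \<le> x" "x \<le> 1"
  shows "Psi_weight d x c \<ge> 0"
  using kappa_nonneg[OF assms] unfolding Psi_weight_def label_weight_def by simp

definition mu_weight :: "nat \<Rightarrow> real \<Rightarrow> nat \<Rightarrow> nat \<Rightarrow> real" where
  "mu_weight d x r a = (if r = a then kappa_plus d x else (kappa_plus d x + kappa_minus d x) / 2)"

definition beta :: "nat \<Rightarrow> real \<Rightarrow> real" where
  "beta d x = kappa_plus d x + (real d - 1) * (kappa_plus d x + kappa_minus d x) / 2"

lemma sum_Psi_weight_mu_re:
  assumes "a \<in> {1..d}" "r \<in> {1..d}" "r' \<in> {1..d}"
  shows "(\<Sum>c\<in>CLabels d. Psi_weight d x c * mu_re r a c * mu_re r' a c) = (if r = r' then mu_weight d x r a else 0)"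
  using assms unfolding Psi_weight_def mu_weight_def by (subst sum_label_weight_mu_re) auto

lemma sum_mu_weight:
  assumes "r \<in> {1..d}"
  shows "(\<Sum>a\<in>{1..d}. mu_weight d x r a) = beta d x"
proof -
  have "(\<Sum>a\<in>{1..d}. mu_weight d x r a)
      = (\<Sum>a\<in>{1..d}. (kappa_plus d x + kappa_minus d x) / 2
                       + (if a = r then kappa_plus d x - (kappa_plus d x + kappa_minus d x) / 2 else 0))"
    unfolding mu_weight_def by (intro sum.cong) auto
  also have "\<dots> = real d * ((kappa_plus d x + kappa_minus d x) / 2)
                   + (kappa_plus d x - (kappa_plus d x + kappa_minus d x) / 2)"
    using assms by (simp add: sum.distrib)
  also have "\<dots> = beta d x"
    unfolding beta_def by (simp add: field_simps)
  finally show ?thesis .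
qed

lemma beta_pos:
  assumes "d \<ge> 2" "-1 \<le> x" "x \<le> 1"
  shows "beta d x > 0"
proof -
  have "lam_plus d x > 0 \<or> lam_minus d x > 0"
    using lam_sum_pos[OF assms] lam_nonneg[OF assms] by linarith
  then have "kappa_plus d x > 0 \<or> kappa_minus d x > 0"
    using assms unfolding kappa_plus_def kappa_minus_def by auto
  then show ?thesis
    using assms kappa_nonneg[OF assms] unfolding beta_def
    by (auto intro: add_pos_nonneg add_nonneg_pos)
qed

lemma sum_Psi_weight: "(\<Sum>c\<in>CLabels d. Psi_weight d x c) = real d * beta d x"
proof -
  have norm_one: "(\<Sum>p\<in>{1..d} \<times> {1..d}. mu_re (snd p) (fst p) c * mu_re (snd p) (fst p) c) = 1"
    if "c \<in> CLabels d" for c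
    using mu_pair_complete[OF that that] unfolding mu_pair_def
    by (simp flip: of_real_mult of_real_sum)
  have "(\<Sum>c\<in>CLabels d. Psi_weight d x c)
      = (\<Sum>c\<in>CLabels d. \<Sum>p\<in>{1..d} \<times> {1..d}. Psi_weight d x c * mu_re (snd p) (fst p) c * mu_re (snd p) (fst p) c)"
  proof (intro sum.cong refl)
    fix c assume "c \<in> CLabels d"
    show "Psi_weight d x c
        = (\<Sum>p\<in>{1..d} \<times> {1..d}. Psi_weight d x c * mu_re (snd p) (fst p) c * mu_re (snd p) (fst p) c)"
      unfolding mult.assoc sum_distrib_left[symmetric] norm_one[OF \<open>c \<in> CLabels d\<close>] by simp
  qed
  also have "\<dots> = (\<Sum>p\<in>{1..d} \<times> {1..d}. mu_weight d x (snd p) (fst p))"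
    by (subst sum.swap) (intro sum.cong refl, auto simp: sum_Psi_weight_mu_re)
  also have "\<dots> = (\<Sum>r\<in>{1..d}. \<Sum>a\<in>{1..d}. mu_weight d x r a)"
    by (subst sum.swap) (simp add: sum.cartesian_product split_beta)
  also have "\<dots> = (\<Sum>r\<in>{1..d}. beta d x)"
    by (intro sum.cong refl sum_mu_weight)
  also have "\<dots> = real d * beta d x"
    by simp
  finally show ?thesis .
qed

lemma inner_AC_Psi:
  assumes "d \<ge> 2" "-1 \<le> x" "x \<le> 1" "r \<in> {1..d}"
  shows "inner_AC d \<phi> (Psi d x r)
           = (\<Sum>a\<in>{1..d}. \<Sum>c\<in>CLabels d. cnj (\<phi> a c) * of_real (Psi_weight d x c * mu_re r a c))"
  unfolding inner_AC_def sum.cartesian_product'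
  using Psi_eq[OF assms] by (intro sum.cong refl) auto

section \<open>The optimal unitary\<close>

lemma sum_overlaps_le:
  assumes "d \<ge> 2" "-1 \<le> x" "x \<le> 1" "unitary_C d V" "onb_C d e"
  shows "(\<Sum>i\<in>{1..d}. \<Sum>r\<in>{1..d}. (cmod (inner_AC d (apply_IV_adjoint d V (psi_max d e i)) (Psi d x r)))\<^sup>2)
           \<le> (beta d x)\<^sup>2"
proof -
  let ?\<phi> = "\<lambda>i. apply_IV_adjoint d V (psi_max d e i)"
  have "(\<Sum>i\<in>{1..d}. \<Sum>r\<in>{1..d}. (cmod (inner_AC d (?\<phi> i) (Psi d x r)))\<^sup>2)
      = (\<Sum>i\<in>{1..d}. \<Sum>r\<in>{1..d}.
           (cmod (\<Sum>a\<in>{1..d}. \<Sum>c\<in>CLabels d. cnj (?\<phi> i a c) * of_real (Psi_weight d x c * mu_re r a c)))\<^sup>2)"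
    using inner_AC_Psi[OF assms(1-3)] by (intro sum.cong refl) auto
  also have "\<dots> \<le> 1 / real d * beta d x * (\<Sum>c\<in>CLabels d. Psi_weight d x c)"
    using assms finite_CLabels Psi_weight_nonneg sum_norm_apply_IV_adjoint_psi_max
      sum_Psi_weight_mu_re sum_mu_weight beta_pos
    by (intro sum_weighted_overlaps_le[where w = "mu_weight d x"]) auto
  also have "\<dots> = (beta d x)\<^sup>2"
    using assms(1) by (simp add: sum_Psi_weight power2_eq_square)
  finally show ?thesis .
qed

definition optimal_unitary :: "nat \<Rightarrow> (nat \<Rightarrow> label \<Rightarrow> complex) \<Rightarrow> label \<Rightarrow> label \<Rightarrow> complex" where
  "optimal_unitary d e c' c = (\<Sum>p\<in>{1..d} \<times> {1..d}. onb_pair d e p c' * mu_pair p c)"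

lemma unitary_optimal_unitary:
  assumes "onb_C d e"
  shows "unitary_C d (optimal_unitary d e)"
  unfolding optimal_unitary_def
  using onb_pair_orthonormal[OF assms] mu_pair_orthonormal onb_pair_complete[OF assms] mu_pair_complete
  by (intro unitary_C_change_of_basis) auto

lemma apply_IV_adjoint_optimal_unitary:
  assumes "onb_C d e" "i \<in> {1..d}"
  shows "apply_IV_adjoint d (optimal_unitary d e) (psi_max d e i) = Psi_max d i"
proof (intro ext)
  fix a c
  show "apply_IV_adjoint d (optimal_unitary d e) (psi_max d e i) a c = Psi_max d i a c"
  proof (cases "a \<in> {1..d}")
    case True
    let ?P = "{1..d} \<times> {1..d}"
    have "apply_IV_adjoint d (optimal_unitary d e) (psi_max d e i) a c
        = of_real (1 / sqrt (real d)) * (\<Sum>p\<in>?P. cnj (mu_pair p c)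
              * (\<Sum>c'\<in>CLabels d. cnj (onb_pair d e p c') * onb_pair d e (a, i) c'))"
      using True unfolding apply_IV_adjoint_def optimal_unitary_def psi_max_def onb_pair_def
      by (simp del: One_nat_def add: cnj_sum sum_distrib_left sum_distrib_right sum.swap[where B = ?P] mult_ac)
    also have "\<dots> = of_real (1 / sqrt (real d)) * (\<Sum>p\<in>?P. if p = (a, i) then cnj (mu_pair p c) else 0)"
      using True assms by (simp add: onb_pair_orthonormal if_distrib if_distribR cong: if_cong)
    also have "\<dots> = Psi_max d i a c"
      using True assms unfolding Psi_max_def mu_pair_def mu_r_real by simp
    finally show ?thesis .
  next
    case False
    then show ?thesis
      unfolding apply_IV_adjoint_def psi_max_def Psi_max_def by auto
  qed
qed

lemma inner_AC_Psi_max_Psi: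
  assumes "d \<ge> 2" "-1 \<le> x" "x \<le> 1" "i \<in> {1..d}" "r \<in> {1..d}"
  shows "inner_AC d (Psi_max d i) (Psi d x r) = of_real ((if i = r then beta d x else 0) / sqrt (real d))"
proof -
  have "inner_AC d (Psi_max d i) (Psi d x r)
      = (\<Sum>a\<in>{1..d}. \<Sum>c\<in>CLabels d. of_real (Psi_weight d x c * mu_re i a c * mu_re r a c / sqrt (real d)))"
    unfolding inner_AC_Psi[OF assms(1-3,5)]
    by (intro sum.cong refl) (simp add: Psi_max_def mu_r_real mult_ac)
  also have "\<dots> = of_real ((\<Sum>a\<in>{1..d}. \<Sum>c\<in>CLabels d. Psi_weight d x c * mu_re i a c * mu_re r a c) / sqrt (real d))"
    by (simp only: of_real_sum sum_divide_distrib)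
  also have "(\<Sum>a\<in>{1..d}. \<Sum>c\<in>CLabels d. Psi_weight d x c * mu_re i a c * mu_re r a c)
      = (\<Sum>a\<in>{1..d}. if i = r then mu_weight d x i a else 0)"
    using assms by (intro sum.cong refl) (simp add: sum_Psi_weight_mu_re)
  also have "\<dots> = (if i = r then beta d x else 0)"
    using sum_mu_weight[OF assms(4), of x] by (cases "i = r") simp_all
  finally show ?thesis .
qed

lemma sum_overlaps_Psi_max:
  assumes "d \<ge> 2" "-1 \<le> x" "x \<le> 1"
  shows "(\<Sum>i\<in>{1..d}. \<Sum>r\<in>{1..d}. (cmod (inner_AC d (Psi_max d i) (Psi d x r)))\<^sup>2) = (beta d x)\<^sup>2"
proof -
  have "(\<Sum>i\<in>{1..d}. \<Sum>r\<in>{1..d}. (cmod (inner_AC d (Psi_max d i) (Psi d x r)))\<^sup>2)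
      = (\<Sum>i\<in>{1..d}. \<Sum>r\<in>{1..d}. if i = r then (beta d x)\<^sup>2 / real d else 0)"
    using assms by (intro sum.cong refl) (simp add: inner_AC_Psi_max_Psi norm_divide power_divide)
  also have "\<dots> = (beta d x)\<^sup>2"
    using assms(1) by simp
  finally show ?thesis .
qed

theorem lemma1:
  fixes d :: nat and x :: real and e :: "nat \<Rightarrow> label \<Rightarrow> complex"
  assumes "d \<ge> 2" and "-1 \<le> x" and "x \<le> 1" and "onb_C d e"
  shows "complex_of_real (FEF d e (rhoAC d x))
           = (\<Sum>r\<in>{1..d}. expect d (rhoAC d x) (Psi_max d r))"
proof -
  let ?F = "fef_objective d e (rhoAC d x)" and ?V\<^sub>0 = "optimal_unitary d e"
  have upper: "?F V \<le> (beta d x)\<^sup>2 / real d" if "unitary_C d V" for V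
    unfolding fef_objective_rhoAC using sum_overlaps_le[OF assms(1-3) that assms(4)]
    by (simp add: divide_right_mono)
  have attained: "?F ?V\<^sub>0 = (beta d x)\<^sup>2 / real d"
    unfolding fef_objective_rhoAC sum_overlaps_Psi_max[OF assms(1-3), symmetric]
    using apply_IV_adjoint_optimal_unitary[OF assms(4)] by (intro arg_cong2[where f = "(/)"] sum.cong refl) auto
  have "FEF d e (rhoAC d x) = (beta d x)\<^sup>2 / real d"
    unfolding FEF_def fef_objective_def[symmetric]
  proof (rule cSup_eq_maximum)
    show "(beta d x)\<^sup>2 / real d \<in> ?F ` {V. unitary_C d V}"
      using attained unitary_optimal_unitary[OF assms(4)] by (intro rev_image_eqI[of ?V\<^sub>0]) auto
  qed (use upper in auto)
  moreover have "(\<Sum>r\<in>{1..d}. expect d (rhoAC d x) (Psi_max d r)) = of_real ((beta d x)\<^sup>2 / real d)"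
    unfolding expect_rhoAC sum_overlaps_Psi_max[OF assms(1-3), symmetric]
    by (simp add: sum_divide_distrib flip: of_real_sum)
  ultimately show ?thesis
    by simp
qed

end
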